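(* Let $f$, $\mathcal{I}$, and the notation for streams be as in the context, and let $0 < c \le 1$ and $\epsilon > 0$. Let $\mathcal{A}$ be an algorithm with the $c$-approximation property (not necessarily monotone). Let $S_1, S_2, S_3$ be finite streams and suppose $\mathcal{A}(S_1\circ S_2) \le (1+\epsilon)\,\mathcal{A}(S_2)$. Then $$\mathcal{A}(S_2\circ S_3) \ge \frac{c^2}{c+1+\epsilon}\, f(\mathtt{OPT}_{123}),$$ where $\mathtt{OPT}_{123}$ is an optimal solution for the stream $S_1\circ S_2\circ S_3$.
   Context: Let $U$ be a finite set of items and $f: 2^U \to \mathbb{R}_{\ge 0}$ a nonnegative submodular function, i.e. $f(A\cup\{v\}) - f(A) \ge f(B\cup\{v\}) - f(B)$ for all $A\subseteq B\subset U$ and $v\in U\setminus B$. Let $\mathcal{I}\subseteq 2^U$ be a hereditary constraint: $A\in\mathcal{I}$ and $A'\subseteq A$ imply $A'\in\mathcal{I}$ (with $\emptyset\in\mathcal{I}$). A stream is a finite sequence of items of $U$; $S_1\circ S_2$ denotes concatenation. For a stream $S$, an optimal solution $\mathtt{OPT}_S$ is a set maximizing $f$ over all sets in $\mathcal{I}$ consisting of items occurring in $S$. An algorithm $\mathcal{A}$ maps each stream $S$ to a set in $\mathcal{I}$ consisting of items occurring in $S$; $\mathcal{A}(S)$ denotes the $f$-value of that set. $\mathcal{A}$ has the $c$-approximation property if for every stream $S$, $\mathcal{A}(S)\ge c\cdot f(\mathtt{OPT}_S)$. *)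

theory Defs
  imports Complex_Main
begin

definition nonneg_submodular :: "'a set \<Rightarrow> ('a set \<Rightarrow> real) \<Rightarrow> bool" where
  "nonneg_submodular U f \<longleftrightarrow>
     (\<forall>A. A \<subseteq> U \<longrightarrow> f A \<ge> 0) \<and>
     (\<forall>A B v. A \<subseteq> B \<longrightarrow> B \<subset> U \<longrightarrow> v \<in> U - B \<longrightarrow>
        f (insert v A) - f A \<ge> f (insert v B) - f B)"

definition hereditary :: "'a set \<Rightarrow> 'a set set \<Rightarrow> bool" where
  "hereditary U \<I> \<longleftrightarrow> \<I> \<subseteq> Pow U \<and> {} \<in> \<I> \<and>
     (\<forall>A A'. A \<in> \<I> \<longrightarrow> A' \<subseteq> A \<longrightarrow> A' \<in> \<I>)"

definition is_opt :: "('a set \<Rightarrow> real) \<Rightarrow> 'a set set \<Rightarrow> 'a list \<Rightarrow> 'a set \<Rightarrow> bool" where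
  "is_opt f \<I> S X \<longleftrightarrow> X \<in> \<I> \<and> X \<subseteq> set S \<and>
     (\<forall>Y. Y \<in> \<I> \<longrightarrow> Y \<subseteq> set S \<longrightarrow> f Y \<le> f X)"

definition is_algorithm :: "'a set \<Rightarrow> 'a set set \<Rightarrow> ('a list \<Rightarrow> 'a set) \<Rightarrow> bool" where
  "is_algorithm U \<I> Alg \<longleftrightarrow>
     (\<forall>S. set S \<subseteq> U \<longrightarrow> Alg S \<in> \<I> \<and> Alg S \<subseteq> set S)"

definition c_approx :: "'a set \<Rightarrow> ('a set \<Rightarrow> real) \<Rightarrow> 'a set set \<Rightarrow> real \<Rightarrow> ('a list \<Rightarrow> 'a set) \<Rightarrow> bool" where
  "c_approx U f \<I> c Alg \<longleftrightarrow>
     (\<forall>S X. set S \<subseteq> U \<longrightarrow> is_opt f \<I> S X \<longrightarrow> f (Alg S) \<ge> c * f X)"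

end

theory Submission
  imports Defs
begin

text \<open>Split \<open>OPT\<^sub>1\<^sub>2\<^sub>3\<close> into its items occurring in \<open>S\<^sub>1\<circ>S\<^sub>2\<close> and the rest, which occur in
  \<open>S\<^sub>3\<close>; by submodularity and \<open>f {} \<ge> 0\<close>, \<open>f\<close> is subadditive on this partition. The
  first part is feasible for \<open>S\<^sub>1\<circ>S\<^sub>2\<close>, so \<open>c\<close> times its value is at most
  \<open>\<A>(S\<^sub>1\<circ>S\<^sub>2) \<le> (1+\<epsilon>) \<A>(S\<^sub>2)\<close>, and \<open>\<A>(S\<^sub>2)\<close> is a feasible set for \<open>S\<^sub>2\<circ>S\<^sub>3\<close>, whence
  \<open>c \<A>(S\<^sub>2) \<le> \<A>(S\<^sub>2\<circ>S\<^sub>3)\<close>. The second part is feasible for \<open>S\<^sub>2\<circ>S\<^sub>3\<close>. Altogether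
  \<open>c\<^sup>2 f(OPT\<^sub>1\<^sub>2\<^sub>3) \<le> (1+\<epsilon>) \<A>(S\<^sub>2\<circ>S\<^sub>3) + c \<A>(S\<^sub>2\<circ>S\<^sub>3)\<close>.\<close>

lemma nonneg_submodular_marginal_antimono:
  assumes submod: "nonneg_submodular U f" and "finite X"
    and "C \<subseteq> D" "D \<subseteq> U" "X \<subseteq> U" "X \<inter> D = {}"
  shows "f (D \<union> X) - f D \<le> f (C \<union> X) - f C"
  using \<open>finite X\<close> assms(3-)
proof (induction X rule: finite_induct)
  case empty
  then show ?case by simp
next
  case (insert x X)
  have "x \<notin> D \<union> X" "C \<union> X \<subseteq> D \<union> X" "D \<union> X \<subset> U" "x \<in> U"
    using insert by auto
  then have "f (insert x (D \<union> X)) - f (D \<union> X) \<le> f (insert x (C \<union> X)) - f (C \<union> X)"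
    using submod unfolding nonneg_submodular_def by blast
  moreover have "f (D \<union> X) - f D \<le> f (C \<union> X) - f C"
    using insert by auto
  ultimately show ?case by simp
qed

lemma nonneg_submodular_subadditive:
  assumes submod: "nonneg_submodular U f" and "finite B"
    and "A \<subseteq> U" "B \<subseteq> U" "A \<inter> B = {}"
  shows "f (A \<union> B) \<le> f A + f B"
proof -
  have "f (A \<union> B) - f A \<le> f ({} \<union> B) - f {}"
    using nonneg_submodular_marginal_antimono[OF submod \<open>finite B\<close>] assms(3-) by blast
  moreover have "f {} \<ge> 0"
    using submod unfolding nonneg_submodular_def by simp
  ultimately show ?thesis by simp
qed

lemma is_opt_exists:
  assumes "finite U" "hereditary U \<I>" "set S \<subseteq> U"
  shows "\<exists>X. is_opt f \<I> S X"
proof -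
  define F where "F = {Y \<in> \<I>. Y \<subseteq> set S}"
  have "finite F"
    using assms(1,2) finite_subset unfolding F_def hereditary_def by fastforce
  moreover have "{} \<in> F"
    using assms(2) unfolding F_def hereditary_def by simp
  ultimately obtain X where "X \<in> F" "f X = Max (f ` F)"
    using Max_in[of "f ` F"] by (metis empty_iff finite_imageI image_iff)
  with \<open>finite F\<close> have "X \<in> F" "\<forall>Y\<in>F. f Y \<le> f X"
    by auto
  then show ?thesis
    unfolding is_opt_def F_def by auto
qed

lemma c_approx_feasible_le:
  assumes "finite U" "hereditary U \<I>" "c_approx U f \<I> c Alg" "c \<ge> 0"
    and "set S \<subseteq> U" "Y \<in> \<I>" "Y \<subseteq> set S"
  shows "c * f Y \<le> f (Alg S)"
proof -
  obtain X where X: "is_opt f \<I> S X"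
    using is_opt_exists[OF assms(1,2,5)] by blast
  then have "c * f Y \<le> c * f X"
    using assms(4,6,7) unfolding is_opt_def by (simp add: mult_left_mono)
  also have "\<dots> \<le> f (Alg S)"
    using assms(3,5) X unfolding c_approx_def by blast
  finally show ?thesis .
qed

theorem lemma2:
  fixes U :: "'a set" and f :: "'a set \<Rightarrow> real" and \<I> :: "'a set set"
    and Alg :: "'a list \<Rightarrow> 'a set" and c \<epsilon> :: real
    and S1 S2 S3 :: "'a list" and OPT123 :: "'a set"
  assumes "finite U"
    and "nonneg_submodular U f"
    and "hereditary U \<I>"
    and "0 < c" and "c \<le> 1" and "\<epsilon> > 0"
    and "is_algorithm U \<I> Alg"
    and "c_approx U f \<I> c Alg"
    and "set S1 \<subseteq> U" and "set S2 \<subseteq> U" and "set S3 \<subseteq> U"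
    and "f (Alg (S1 @ S2)) \<le> (1 + \<epsilon>) * f (Alg S2)"
    and "is_opt f \<I> (S1 @ S2 @ S3) OPT123"
  shows "f (Alg (S2 @ S3)) \<ge> c ^ 2 / (c + 1 + \<epsilon>) * f OPT123"
proof -
  define A where "A = OPT123 \<inter> set (S1 @ S2)"
  define B where "B = OPT123 - set (S1 @ S2)"
  define a where "a = f (Alg (S2 @ S3))"
  have OPT: "OPT123 \<in> \<I>" "OPT123 \<subseteq> set (S1 @ S2 @ S3)" "OPT123 \<subseteq> U"
    using assms(3,13) unfolding is_opt_def hereditary_def by auto
  have feasible: "A \<in> \<I>" "B \<in> \<I>" "Alg S2 \<in> \<I>" "Alg S2 \<subseteq> set S2"
    using OPT assms(3,7,10) unfolding A_def B_def hereditary_def is_algorithm_def by auto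
  note le_Alg = c_approx_feasible_le[OF assms(1,3,8) less_imp_le[OF assms(4)]]
  have A_le: "c * f A \<le> (1 + \<epsilon>) * f (Alg S2)"
    using le_Alg[of "S1 @ S2" A] feasible assms(9,10,12) unfolding A_def by auto
  have Alg_S2_le: "c * f (Alg S2) \<le> a" and B_le: "c * f B \<le> a"
    using le_Alg[of "S2 @ S3"] feasible OPT(2) assms(10,11) unfolding a_def B_def by auto
  have "A \<inter> B = {}" "A \<subseteq> U" "B \<subseteq> U" "OPT123 = A \<union> B"
    using OPT(3) unfolding A_def B_def by auto
  then have "f OPT123 \<le> f A + f B"
    using nonneg_submodular_subadditive[OF assms(2)] finite_subset[OF _ assms(1)] by metis
  then have "c\<^sup>2 * f OPT123 \<le> c * (c * f A) + c * (c * f B)"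
    using assms(4) mult_left_mono[of "f OPT123" "f A + f B" "c\<^sup>2"]
    by (simp add: power2_eq_square distrib_left mult.assoc)
  also have "\<dots> \<le> c * ((1 + \<epsilon>) * f (Alg S2)) + c * a"
    using A_le B_le assms(4) by (intro add_mono mult_left_mono) auto
  also have "\<dots> = (1 + \<epsilon>) * (c * f (Alg S2)) + c * a"
    by (simp add: mult.left_commute)
  also have "\<dots> \<le> (1 + \<epsilon>) * a + c * a"
    using Alg_S2_le assms(4,6) by (intro add_mono mult_left_mono) auto
  finally have "c\<^sup>2 * f OPT123 \<le> (c + 1 + \<epsilon>) * a"
    by (simp add: algebra_simps)
  then show ?thesis
    using assms(4,6) unfolding a_def by (simp add: pos_divide_le_eq mult.commute)
qed

end
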